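(* Under the assumptions of Theorem 11 ($P_{XY}$ on $\mathcal X\times\mathcal Y$, $|\mathcal X|=M$, fixed list size $L<M$, list decoder $\mathcal L$, $P_{\mathcal L}=\mathbb P[X\notin\mathcal L(Y)]$): (a) $$H(X|Y)\le\log M-d\Big(P_{\mathcal L}\,\Big\|\,1-\frac LM\Big)-\frac{\log e}{2}\cdot\frac{\big(\mathbb E[P_{X|Y}(X|Y)]-\frac{1-P_{\mathcal L}}L-\frac{P_{\mathcal L}}{M-L}\big)^+}{\sup_{(x,y)}P_{X|Y}(x|y)};$$ (b) if the list decoder selects, for each $y$, the $L$ most probable elements of $\mathcal X$ given $Y=y$, then $$H(X|Y)\le\log M-d\Big(P_{\mathcal L}\,\Big\|\,1-\frac LM\Big)-\frac{\log e}{2}\cdot\frac{\big(\mathbb E[P_{X|Y}(X|Y)]-\frac{1-P_{\mathcal L}}L\big)^+}{\sup_{(x,y)}P_{X|Y}(x|y)}.$$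
   Context: Logarithms in an arbitrary fixed base, $\log e$ the logarithm of Euler's number in that base; $H(X|Y)$ is conditional Shannon entropy; $d(p\|q):=p\log\frac pq+(1-p)\log\frac{1-p}{1-q}$ is the binary relative entropy (continuously extended to $[0,1]^2$); $u^+:=\max\{u,0\}$. *)

theory Defs
  imports "HOL-Probability.Probability"
begin

text \<open>Conditional probability P_{X|Y}(x|y) = P_{XY}(x,y) / P_Y(y) (equal to 0 when P_Y(y) = 0).\<close>
definition condp :: "('a \<times> 'b) pmf \<Rightarrow> 'a \<Rightarrow> 'b \<Rightarrow> real" where
  "condp P x y = pmf P (x, y) / pmf (map_pmf snd P) y"

definition cond_entropy :: "real \<Rightarrow> ('a \<times> 'b) pmf \<Rightarrow> real" where
  "cond_entropy b P = measure_pmf.expectation P (\<lambda>(x, y). - log b (condp P x y))"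

text \<open>Binary relative entropy d(p||q) with the convention 0 log 0 = 0
  (its continuous extension, for q in the open interval (0,1)).\<close>
definition bin_rel_ent :: "real \<Rightarrow> real \<Rightarrow> real \<Rightarrow> real" where
  "bin_rel_ent b p q =
     (if p = 0 then 0 else p * log b (p / q)) +
     (if p = 1 then 0 else (1 - p) * log b ((1 - p) / (1 - q)))"

end

theory Submission
  imports Defs
begin

text \<open>
  Let \<open>Q(x|y)\<close> be uniform with total mass \<open>1 - P\<^sub>L\<close> on the list \<open>\<L>(y)\<close> and
  uniform with total mass \<open>P\<^sub>L\<close> off it. Then \<open>log M - d(P\<^sub>L \<parallel> 1 - L/M) - H(X|Y)\<close> is the
  conditional relative entropy \<open>\<bbbE>[log P(X|Y) / Q(X|Y)]\<close>. Let \<open>S = sup P(x|y)\<close>. The pointwise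
  inequality \<open>ln t \<ge> 1 - 1/t + (t - 1)\<^sup>2 / (2 \<beta> t)\<close> for \<open>0 < t \<le> \<beta>\<close>, \<open>\<beta> \<ge> 1\<close>, applied to
  \<open>t = P(x|y) / Q(x|y)\<close> and \<open>\<beta> = S / Q(x|y)\<close>, bounds this relative entropy below by
  \<open>(\<bbbE>[P(X|Y)] - \<bbbE>[Q(X|Y)]) / (2 S)\<close> nats, because \<open>\<Sum>\<^sub>x Q(x|y)\<^sup>2\<close> does not depend
  on \<open>y\<close> and equals \<open>\<bbbE>[Q(X|Y)]\<close>. Finally \<open>\<bbbE>[Q(X|Y)] \<le> (1 - P\<^sub>L)/L + P\<^sub>L/(M - L)\<close>, and
  for the maximum-likelihood list decoder \<open>P\<^sub>L/(M - L) \<le> (1 - P\<^sub>L)/L\<close>, so that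
  \<open>\<bbbE>[Q(X|Y)] \<le> (1 - P\<^sub>L)/L\<close>.
\<close>

lemma pmf_le_pmf_snd: "pmf P (x, y) \<le> pmf (map_pmf snd P) y"
proof -
  have "pmf P (x, y) = measure P {(x, y)}" by (simp add: measure_pmf_single)
  also have "\<dots> \<le> measure P (snd -` {y})"
    by (rule measure_pmf.finite_measure_mono) auto
  finally show ?thesis by (simp add: pmf_map)
qed

lemma condp_nonneg: "0 \<le> condp P x y"
  unfolding condp_def by simp

lemma condp_le_1: "condp P x y \<le> 1"
  unfolding condp_def using pmf_le_pmf_snd[of P x y]
  by (cases "pmf (map_pmf snd P) y = 0") (auto simp: divide_le_eq_1)

lemma pmf_eq_pmf_snd_mult_condp: "pmf P (x, y) = pmf (map_pmf snd P) y * condp P x y"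
  unfolding condp_def using pmf_le_pmf_snd[of P x y]
  by (cases "pmf (map_pmf snd P) y = 0") auto

lemma condp_pos: "(x, y) \<in> set_pmf P \<Longrightarrow> 0 < condp P x y"
proof -
  assume "(x, y) \<in> set_pmf P"
  then have "0 < pmf P (x, y)" by (simp add: pmf_positive)
  moreover from this have "0 < pmf (map_pmf snd P) y" using pmf_le_pmf_snd[of P x y] by linarith
  ultimately show ?thesis by (simp add: condp_def)
qed

lemma nn_integral_pmf_prod_finite:
  fixes P :: "('a::finite \<times> 'b) pmf" and f :: "'a \<times> 'b \<Rightarrow> ennreal"
  shows "(\<integral>\<^sup>+z. f z \<partial>P) = (\<integral>\<^sup>+y. (\<Sum>x\<in>UNIV. ennreal (pmf P (x, y)) * f (x, y)) \<partial>count_space UNIV)"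
proof -
  define g where "g z = ennreal (pmf P z) * f z" for z
  have g_split: "g z = (\<Sum>x\<in>UNIV. g z * indicator (range (Pair x)) z)" for z
  proof -
    have "(\<Sum>x\<in>UNIV. g z * indicator (range (Pair x)) z)
        = (\<Sum>x\<in>{fst z}. g z * indicator (range (Pair x)) z)"
      by (rule sum.mono_neutral_right) (auto simp: indicator_def)
    also have "\<dots> = g z" by (cases z) (auto simp: indicator_def)
    finally show ?thesis by simp
  qed
  have "(\<integral>\<^sup>+z. f z \<partial>P) = (\<integral>\<^sup>+z. g z \<partial>count_space UNIV)"
    by (simp add: nn_integral_measure_pmf g_def)
  also have "\<dots> = (\<integral>\<^sup>+z. (\<Sum>x\<in>UNIV. g z * indicator (range (Pair x)) z) \<partial>count_space UNIV)"
    by (subst g_split) simp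
  also have "\<dots> = (\<Sum>x\<in>UNIV. \<integral>\<^sup>+z. g z * indicator (range (Pair x)) z \<partial>count_space UNIV)"
    by (rule nn_integral_sum) auto
  also have "\<dots> = (\<Sum>x\<in>UNIV. \<integral>\<^sup>+z. g z \<partial>count_space (range (Pair x)))"
    by (simp add: nn_integral_count_space_indicator)
  also have "\<dots> = (\<Sum>x\<in>UNIV. \<integral>\<^sup>+y. g (x, y) \<partial>count_space UNIV)"
  proof (rule sum.cong[OF refl])
    fix x :: 'a
    have "bij_betw (Pair x) (UNIV :: 'b set) (range (Pair x))"
      by (auto simp: bij_betw_def inj_on_def)
    from nn_integral_bij_count_space[OF this, of g]
    show "(\<integral>\<^sup>+z. g z \<partial>count_space (range (Pair x))) = (\<integral>\<^sup>+y. g (x, y) \<partial>count_space UNIV)"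
      by simp
  qed
  also have "\<dots> = (\<integral>\<^sup>+y. (\<Sum>x\<in>UNIV. g (x, y)) \<partial>count_space UNIV)"
    by (rule nn_integral_sum[symmetric]) auto
  finally show ?thesis by (simp add: g_def)
qed

lemma nn_integral_pmf_prod_finite_real:
  fixes P :: "('a::finite \<times> 'b) pmf" and f :: "'a \<times> 'b \<Rightarrow> real"
  assumes f_nonneg: "\<And>z. 0 \<le> f z"
  shows "(\<integral>\<^sup>+z. ennreal (f z) \<partial>P) = (\<integral>\<^sup>+y. ennreal (\<Sum>x\<in>UNIV. pmf P (x, y) * f (x, y)) \<partial>count_space UNIV)"
  unfolding nn_integral_pmf_prod_finite
proof (intro nn_integral_cong)
  fix y
  have "(\<Sum>x\<in>UNIV. ennreal (pmf P (x, y)) * ennreal (f (x, y)))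
      = (\<Sum>x\<in>UNIV. ennreal (pmf P (x, y) * f (x, y)))"
    by (intro sum.cong refl ennreal_mult''[symmetric] f_nonneg)
  also have "\<dots> = ennreal (\<Sum>x\<in>UNIV. pmf P (x, y) * f (x, y))"
    by (intro sum_ennreal mult_nonneg_nonneg pmf_nonneg f_nonneg)
  finally show "(\<Sum>x\<in>UNIV. ennreal (pmf P (x, y)) * ennreal (f (x, y)))
      = ennreal (\<Sum>x\<in>UNIV. pmf P (x, y) * f (x, y))" .
qed

lemma nn_integral_div_condp_le:
  fixes P :: "('a::finite \<times> 'b) pmf" and k :: "'a \<Rightarrow> 'b \<Rightarrow> real"
  assumes k_nonneg: "\<And>x y. 0 \<le> k x y" and k_sum: "\<And>y. (\<Sum>x\<in>UNIV. k x y) \<le> C"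
  shows "(\<integral>\<^sup>+z. ennreal (k (fst z) (snd z) / condp P (fst z) (snd z)) \<partial>P) \<le> ennreal C"
proof -
  \<comment> \<open>where \<open>condp P x y = 0\<close>, also \<open>pmf P (x, y) = 0\<close>, so the junk value \<open>k x y / 0 = 0\<close> is harmless\<close>
  have pointwise: "pmf P (x, y) * (k x y / condp P x y) \<le> pmf (map_pmf snd P) y * k x y" for x y
    using k_nonneg[of x y] condp_nonneg[of P x y]
    by (cases "condp P x y = 0") (simp_all add: pmf_eq_pmf_snd_mult_condp)
  have "(\<integral>\<^sup>+z. ennreal (k (fst z) (snd z) / condp P (fst z) (snd z)) \<partial>P)
      = (\<integral>\<^sup>+y. ennreal (\<Sum>x\<in>UNIV. pmf P (x, y) * (k x y / condp P x y)) \<partial>count_space UNIV)"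
    by (subst nn_integral_pmf_prod_finite_real) (auto intro: divide_nonneg_nonneg k_nonneg condp_nonneg)
  also have "\<dots> \<le> (\<integral>\<^sup>+y. ennreal (pmf (map_pmf snd P) y) * ennreal C \<partial>count_space UNIV)"
  proof (rule nn_integral_mono)
    fix y
    have "(\<Sum>x\<in>UNIV. pmf P (x, y) * (k x y / condp P x y)) \<le> pmf (map_pmf snd P) y * C"
    proof -
      have "(\<Sum>x\<in>UNIV. pmf P (x, y) * (k x y / condp P x y))
          \<le> (\<Sum>x\<in>UNIV. pmf (map_pmf snd P) y * k x y)"
        by (rule sum_mono[OF pointwise])
      also have "\<dots> \<le> pmf (map_pmf snd P) y * C"
        unfolding sum_distrib_left[symmetric] by (rule mult_left_mono[OF k_sum pmf_nonneg])
      finally show ?thesis .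
    qed
    then show "ennreal (\<Sum>x\<in>UNIV. pmf P (x, y) * (k x y / condp P x y))
        \<le> ennreal (pmf (map_pmf snd P) y) * ennreal C"
      by (simp add: ennreal_mult'[symmetric] ennreal_leI)
  qed
  also have "\<dots> = (\<integral>\<^sup>+y. ennreal C \<partial>map_pmf snd P)"
    by (rule nn_integral_measure_pmf[symmetric])
  also have "\<dots> = ennreal C"
    by (simp add: measure_pmf.emeasure_space_1)
  finally show ?thesis .
qed

lemma
  fixes P :: "('a::finite \<times> 'b) pmf" and k :: "'a \<Rightarrow> 'b \<Rightarrow> real"
  assumes k_nonneg: "\<And>x y. 0 \<le> k x y" and k_sum: "\<And>y. (\<Sum>x\<in>UNIV. k x y) \<le> C"
  shows integrable_div_condp: "integrable P (\<lambda>z. k (fst z) (snd z) / condp P (fst z) (snd z))"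
    and expectation_div_condp_le:
      "measure_pmf.expectation P (\<lambda>z. k (fst z) (snd z) / condp P (fst z) (snd z)) \<le> C"
proof -
  have C_nonneg: "0 \<le> C" using k_sum[of undefined] sum_nonneg[of UNIV "\<lambda>x. k x undefined"] k_nonneg
    by fastforce
  have nonneg: "0 \<le> k (fst z) (snd z) / condp P (fst z) (snd z)" for z
    by (rule divide_nonneg_nonneg[OF k_nonneg condp_nonneg])
  note bound = nn_integral_div_condp_le[of k C P, OF k_nonneg k_sum]
  show int: "integrable P (\<lambda>z. k (fst z) (snd z) / condp P (fst z) (snd z))"
    using nonneg bound by (intro integrableI_nonneg) (auto simp: top.not_eq_extremum order_le_less_trans)
  have "ennreal (measure_pmf.expectation P (\<lambda>z. k (fst z) (snd z) / condp P (fst z) (snd z)))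
      = (\<integral>\<^sup>+z. ennreal (k (fst z) (snd z) / condp P (fst z) (snd z)) \<partial>P)"
    using int nonneg by (intro nn_integral_eq_integral[symmetric]) auto
  with bound have "ennreal (measure_pmf.expectation P (\<lambda>z. k (fst z) (snd z) / condp P (fst z) (snd z)))
      \<le> ennreal C" by simp
  with C_nonneg show "measure_pmf.expectation P (\<lambda>z. k (fst z) (snd z) / condp P (fst z) (snd z)) \<le> C"
    by simp
qed

lemma integrable_ln_condp:
  fixes P :: "('a::finite \<times> 'b) pmf"
  shows "integrable P (\<lambda>z. ln (condp P (fst z) (snd z)))"
proof (rule Bochner_Integration.integrable_bound)
  show "integrable P (\<lambda>z. 1 / condp P (fst z) (snd z))"
    using integrable_div_condp[of "\<lambda>_ _. 1" "real CARD('a)" P] by simp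
  show "AE z in P. norm (ln (condp P (fst z) (snd z))) \<le> norm (1 / condp P (fst z) (snd z))"
  proof (rule AE_pmfI)
    fix z assume "z \<in> set_pmf P"
    then have pos: "0 < condp P (fst z) (snd z)" by (cases z) (simp add: condp_pos)
    have "ln (1 / condp P (fst z) (snd z)) \<le> 1 / condp P (fst z) (snd z) - 1"
      using pos by (intro ln_le_minus_one) simp
    moreover have "ln (condp P (fst z) (snd z)) \<le> 0" using pos condp_le_1[of P] by simp
    ultimately show "norm (ln (condp P (fst z) (snd z))) \<le> norm (1 / condp P (fst z) (snd z))"
      using pos by (simp add: ln_div)
  qed
qed simp

lemma ln_lower_bound_quadratic:
  fixes t \<beta> :: real
  assumes \<beta>: "1 \<le> \<beta>" and t_pos: "0 < t" and t_le: "t \<le> \<beta>"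
  shows "1 - 1 / t + (t - 1)\<^sup>2 / (2 * \<beta> * t) \<le> ln t"
proof -
  define h where "h s = ln s - 1 + 1 / s - (s - 1)\<^sup>2 / (2 * \<beta> * s)" for s
  have h_deriv: "DERIV h s :> (s - 1) / s\<^sup>2 * (1 - (s + 1) / (2 * \<beta>))" if "0 < s" for s
  proof -
    have "DERIV h s :> 1 / s - 1 / s\<^sup>2 - (1 - 1 / s\<^sup>2) / (2 * \<beta>)"
      unfolding h_def using that \<beta>
      by (auto intro!: derivative_eq_intros simp: power2_eq_square field_simps)
    moreover have "1 / s - 1 / s\<^sup>2 - (1 - 1 / s\<^sup>2) / (2 * \<beta>) = (s - 1) / s\<^sup>2 * (1 - (s + 1) / (2 * \<beta>))"
      using that \<beta> by (simp add: power2_eq_square field_simps)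
    ultimately show ?thesis by simp
  qed
  have factor_nonneg: "0 \<le> 1 - (s + 1) / (2 * \<beta>)" if "s \<le> \<beta>" for s
    using that \<beta> by (simp add: field_simps)
  have "h 1 \<le> h t"
  proof (cases "1 \<le> t")
    case True
    show ?thesis
    proof (rule DERIV_nonneg_imp_nondecreasing[OF True])
      fix s assume s: "1 \<le> s" "s \<le> t"
      then have "0 \<le> (s - 1) / s\<^sup>2 * (1 - (s + 1) / (2 * \<beta>))"
        using factor_nonneg[of s] t_le by (intro mult_nonneg_nonneg) auto
      with s show "\<exists>y. DERIV h s :> y \<and> 0 \<le> y" using h_deriv[of s] by auto
    qed
  next
    case False
    show ?thesis
    proof (rule DERIV_nonpos_imp_nonincreasing[of t 1 h])
      show "t \<le> 1" using False by simp
      fix s assume s: "t \<le> s" "s \<le> 1"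
      then have "(s - 1) / s\<^sup>2 * (1 - (s + 1) / (2 * \<beta>)) \<le> 0"
        using factor_nonneg[of s] t_pos \<beta> by (intro mult_nonpos_nonneg divide_nonpos_pos) auto
      with s t_pos show "\<exists>y. DERIV h s :> y \<and> y \<le> 0" using h_deriv[of s] by auto
    qed
  qed
  then show ?thesis by (simp add: h_def)
qed

lemma ln_div_lower_bound_quadratic:
  fixes p q S :: real
  assumes "0 < p" "0 < q" "p \<le> S" "q \<le> S"
  shows "1 - q / p + (p - q)\<^sup>2 / (2 * S * p) \<le> ln p - ln q"
proof -
  have "1 - 1 / (p / q) + (p / q - 1)\<^sup>2 / (2 * (S / q) * (p / q)) \<le> ln (p / q)"
    using assms by (intro ln_lower_bound_quadratic) (auto simp: field_simps)
  moreover have "1 - 1 / (p / q) + (p / q - 1)\<^sup>2 / (2 * (S / q) * (p / q)) = 1 - q / p + (p - q)\<^sup>2 / (2 * S * p)"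
    using assms by (simp add: field_simps power2_eq_square)
  ultimately show ?thesis using assms by (simp add: ln_div)
qed

lemma expectation_ln_condp_minus_ln_nonneg:
  fixes P :: "('a::finite \<times> 'b) pmf" and q :: "'a \<Rightarrow> 'b \<Rightarrow> real"
  assumes q_nonneg: "\<And>x y. 0 \<le> q x y" and q_pos: "\<And>x y. (x, y) \<in> set_pmf P \<Longrightarrow> 0 < q x y"
    and q_sum: "\<And>y. (\<Sum>x\<in>UNIV. q x y) \<le> 1"
    and int_ln_q: "integrable P (\<lambda>z. ln (q (fst z) (snd z)))"
  shows "0 \<le> measure_pmf.expectation P
               (\<lambda>z. ln (condp P (fst z) (snd z)) - ln (q (fst z) (snd z)))"
proof -
  define p where "p z = condp P (fst z) (snd z)" for z
  define r where "r z = q (fst z) (snd z)" for z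
  have ratio: "integrable P (\<lambda>z. r z / p z)" "measure_pmf.expectation P (\<lambda>z. r z / p z) \<le> 1"
    unfolding p_def r_def
    by (rule integrable_div_condp[OF q_nonneg q_sum] expectation_div_condp_le[OF q_nonneg q_sum])+
  have "measure_pmf.expectation P (\<lambda>z. 1 - r z / p z) \<le> measure_pmf.expectation P (\<lambda>z. ln (p z) - ln (r z))"
  proof (rule integral_mono_AE)
    show "integrable P (\<lambda>z. 1 - r z / p z)" using ratio by simp
    show "integrable P (\<lambda>z. ln (p z) - ln (r z))"
      unfolding p_def r_def by (intro Bochner_Integration.integrable_diff integrable_ln_condp int_ln_q)
    show "AE z in P. 1 - r z / p z \<le> ln (p z) - ln (r z)"
    proof (rule AE_pmfI)
      fix z assume "z \<in> set_pmf P"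
      then have "0 < p z" "0 < r z" by (cases z; simp add: p_def r_def condp_pos q_pos)+
      moreover from this have "ln (r z / p z) \<le> r z / p z - 1" by (intro ln_le_minus_one) simp
      ultimately show "1 - r z / p z \<le> ln (p z) - ln (r z)" by (simp add: ln_div)
    qed
  qed
  then show ?thesis using ratio by (simp add: p_def r_def)
qed

lemma expectation_ln_condp_minus_ln_ge:
  fixes P :: "('a::finite \<times> 'b) pmf" and q :: "'a \<Rightarrow> 'b \<Rightarrow> real"
  assumes q_nonneg: "\<And>x y. 0 \<le> q x y" and q_pos: "\<And>x y. (x, y) \<in> set_pmf P \<Longrightarrow> 0 < q x y"
    and q_le: "\<And>x y. q x y \<le> S" and condp_le: "\<And>x y. condp P x y \<le> S"
    and q_sum: "\<And>y. (\<Sum>x\<in>UNIV. q x y) = 1" and q_square_sum: "\<And>y. (\<Sum>x\<in>UNIV. (q x y)\<^sup>2) = Q2"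
    and int_ln_q: "integrable P (\<lambda>z. ln (q (fst z) (snd z)))"
  shows "(measure_pmf.expectation P (\<lambda>z. condp P (fst z) (snd z))
            - 2 * measure_pmf.expectation P (\<lambda>z. q (fst z) (snd z)) + Q2) / (2 * S)
         \<le> measure_pmf.expectation P (\<lambda>z. ln (condp P (fst z) (snd z)) - ln (q (fst z) (snd z)))"
proof -
  define p where "p z = condp P (fst z) (snd z)" for z
  define r where "r z = q (fst z) (snd z)" for z
  define k where "k x y = q x y - (q x y)\<^sup>2 / (2 * S)" for x y
  obtain z0 where "z0 \<in> set_pmf P" using set_pmf_not_empty[of P] by blast
  then have S_pos: "0 < S" using condp_pos condp_le by (cases z0) (fastforce intro: less_le_trans)
  have k_nonneg: "0 \<le> k x y" for x y
  proof -
    have "(q x y)\<^sup>2 \<le> S * q x y"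
      unfolding power2_eq_square by (rule mult_right_mono[OF q_le q_nonneg])
    moreover have "0 \<le> S * q x y" using S_pos q_nonneg[of x y] by simp
    ultimately show ?thesis using S_pos by (simp add: k_def field_simps)
  qed
  have k_sum: "(\<Sum>x\<in>UNIV. k x y) = 1 - Q2 / (2 * S)" for y
    by (simp add: k_def sum_subtractf q_sum q_square_sum flip: sum_divide_distrib)
  have ratio: "integrable P (\<lambda>z. k (fst z) (snd z) / p z)"
    "measure_pmf.expectation P (\<lambda>z. k (fst z) (snd z) / p z) \<le> 1 - Q2 / (2 * S)"
    unfolding p_def using k_sum
    by (auto intro: integrable_div_condp[of k "1 - Q2 / (2 * S)" P, OF k_nonneg]
        expectation_div_condp_le[of k "1 - Q2 / (2 * S)" P, OF k_nonneg])
  have int_p: "integrable P p" and int_r: "integrable P r"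
    using condp_nonneg[of P] condp_le q_nonneg q_le
    by (auto intro!: measure_pmf.integrable_const_bound[where B = S] simp: p_def r_def abs_le_iff)
  define R where "R z = 1 + p z / (2 * S) - r z / S - k (fst z) (snd z) / p z" for z
  have "measure_pmf.expectation P R \<le> measure_pmf.expectation P (\<lambda>z. ln (p z) - ln (r z))"
  proof (rule integral_mono_AE)
    show "integrable P R" unfolding R_def using ratio(1) int_p int_r by simp
    show "integrable P (\<lambda>z. ln (p z) - ln (r z))"
      unfolding p_def r_def by (intro Bochner_Integration.integrable_diff integrable_ln_condp int_ln_q)
    show "AE z in P. R z \<le> ln (p z) - ln (r z)"
    proof (rule AE_pmfI)
      fix z assume "z \<in> set_pmf P"
      then have pos: "0 < p z" "0 < r z" by (cases z; simp add: p_def r_def condp_pos q_pos)+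
      have "R z = 1 - r z / p z + (p z - r z)\<^sup>2 / (2 * S * p z)"
        unfolding R_def k_def r_def using pos S_pos by (simp add: field_simps power2_eq_square)
      also have "\<dots> \<le> ln (p z) - ln (r z)"
        using pos condp_le q_le by (intro ln_div_lower_bound_quadratic) (auto simp: p_def r_def)
      finally show "R z \<le> ln (p z) - ln (r z)" .
    qed
  qed
  moreover have "measure_pmf.expectation P R
      = 1 + measure_pmf.expectation P p / (2 * S) - measure_pmf.expectation P r / S
        - measure_pmf.expectation P (\<lambda>z. k (fst z) (snd z) / p z)"
    unfolding R_def using ratio(1) int_p int_r by simp
  moreover have "(measure_pmf.expectation P p - 2 * measure_pmf.expectation P r + Q2) / (2 * S)
      = 1 + measure_pmf.expectation P p / (2 * S) - measure_pmf.expectation P r / S - (1 - Q2 / (2 * S))"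
    using S_pos by (simp add: field_simps)
  ultimately show ?thesis
    using ratio(2) unfolding p_def r_def by linarith
qed

lemma sum_if_mem_eq:
  fixes A :: "'a::finite set"
  shows "(\<Sum>x\<in>UNIV. if x \<in> A then a else c) = real (card A) * a + (real CARD('a) - real (card A)) * c"
proof -
  have "(\<Sum>x\<in>UNIV. if x \<in> A then a else c) = real (card A) * a + real (card (- A)) * c"
    by (simp add: sum.If_cases Compl_eq_Diff_UNIV)
  also have "card (- A) = CARD('a) - card A"
    by (simp add: Compl_eq_Diff_UNIV card_Diff_subset)
  finally show ?thesis by (simp add: of_nat_diff card_mono)
qed

lemma expectation_if_mem_eq:
  fixes P :: "('a \<times> 'b) pmf" and Ldec :: "'b \<Rightarrow> 'a set"
  shows "measure_pmf.expectation P (\<lambda>z. if fst z \<in> Ldec (snd z) then a else c)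
       = a * (1 - measure_pmf.prob P {(x, y). x \<notin> Ldec y}) + c * measure_pmf.prob P {(x, y). x \<notin> Ldec y}"
proof -
  define IN where "IN = {(x, y). x \<in> Ldec y}"
  have out: "{(x, y). x \<notin> Ldec y} = UNIV - IN" by (auto simp: IN_def)
  have "(\<lambda>z. if fst z \<in> Ldec (snd z) then a else c) = (\<lambda>z. a * indicator IN z + c * indicator (UNIV - IN) z)"
    by (auto simp: IN_def indicator_def fun_eq_iff)
  moreover have "measure_pmf.prob P (UNIV - IN) = 1 - measure_pmf.prob P IN"
    using measure_pmf.prob_compl[of IN P] by simp
  ultimately show ?thesis unfolding out
    by (simp add: Bochner_Integration.integral_add measure_pmf.integrable_const_bound[where B = 1])
qed

text \<open>The conditional distribution \<open>Q(x|y)\<close> of the proof idea, with \<open>\<epsilon>\<close> standing for \<open>P\<^sub>L\<close>.\<close>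

definition list_condp :: "('b \<Rightarrow> 'a set) \<Rightarrow> nat \<Rightarrow> real \<Rightarrow> 'a \<Rightarrow> 'b \<Rightarrow> real" where
  "list_condp Ldec L \<epsilon> x y = (if x \<in> Ldec y then (1 - \<epsilon>) / real L else \<epsilon> / (real CARD('a) - real L))"

lemma list_condp_nonneg:
  "0 \<le> \<epsilon> \<Longrightarrow> \<epsilon> \<le> 1 \<Longrightarrow> L < CARD('a) \<Longrightarrow> 0 \<le> list_condp Ldec L \<epsilon> (x :: 'a) y"
  by (simp add: list_condp_def)

lemma sum_list_condp:
  fixes Ldec :: "'b \<Rightarrow> 'a::finite set"
  assumes "card (Ldec y) = L" "0 < L" "L < CARD('a)"
  shows "(\<Sum>x\<in>UNIV. list_condp Ldec L \<epsilon> x y) = 1"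
  using assms by (simp add: list_condp_def sum_if_mem_eq)

lemma sum_list_condp_square:
  fixes Ldec :: "'b \<Rightarrow> 'a::finite set"
  assumes "card (Ldec y) = L" "0 < L" "L < CARD('a)"
  shows "(\<Sum>x\<in>UNIV. (list_condp Ldec L \<epsilon> x y)\<^sup>2)
       = (1 - \<epsilon>) * ((1 - \<epsilon>) / real L) + \<epsilon> * (\<epsilon> / (real CARD('a) - real L))"
proof -
  have "(\<Sum>x\<in>UNIV. (list_condp Ldec L \<epsilon> x y)\<^sup>2)
      = (\<Sum>x\<in>UNIV. if x \<in> Ldec y then ((1 - \<epsilon>) / real L)\<^sup>2 else (\<epsilon> / (real CARD('a) - real L))\<^sup>2)"
    by (rule sum.cong) (simp_all add: list_condp_def)
  with assms show ?thesis by (simp add: sum_if_mem_eq power2_eq_square)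
qed

lemma list_condp_pos:
  fixes P :: "('a::finite \<times> 'b) pmf"
  assumes "(x, y) \<in> set_pmf P" "0 < L" "L < CARD('a)"
  shows "0 < list_condp Ldec L (measure_pmf.prob P {(x, y). x \<notin> Ldec y}) x y"
proof -
  let ?out = "{(x, y). x \<notin> Ldec y}"
  have pos: "0 < measure_pmf.prob P {(x, y)}" using assms(1) by (simp add: measure_pmf_single pmf_positive)
  show ?thesis
  proof (cases "x \<in> Ldec y")
    case True
    then have "measure_pmf.prob P {(x, y)} \<le> measure_pmf.prob P (UNIV - ?out)"
      by (intro measure_pmf.finite_measure_mono) auto
    with pos have "0 < 1 - measure_pmf.prob P ?out"
      using measure_pmf.prob_compl[of ?out P] by simp
    with True assms show ?thesis by (simp add: list_condp_def)
  next
    case False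
    then have "measure_pmf.prob P {(x, y)} \<le> measure_pmf.prob P ?out"
      by (intro measure_pmf.finite_measure_mono) auto
    with pos False assms show ?thesis by (simp add: list_condp_def)
  qed
qed

lemma log_minus_bin_rel_ent:
  fixes M :: real and L :: nat
  assumes L: "0 < L" "real L < M" and \<epsilon>: "0 \<le> \<epsilon>" "\<epsilon> \<le> 1"
  shows "log b M - bin_rel_ent b \<epsilon> (1 - real L / M)
       = - ((1 - \<epsilon>) * log b ((1 - \<epsilon>) / real L) + \<epsilon> * log b (\<epsilon> / (M - real L)))"
proof -
  have M_pos: "0 < M" using L by linarith
  have out: "(if \<epsilon> = 0 then 0 else \<epsilon> * log b (\<epsilon> / (1 - real L / M)))
      = \<epsilon> * (log b (\<epsilon> / (M - real L)) + log b M)"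
  proof (cases "\<epsilon> = 0")
    case False
    have "\<epsilon> / (1 - real L / M) = \<epsilon> / (M - real L) * M" using L M_pos by (simp add: field_simps)
    then have "log b (\<epsilon> / (1 - real L / M)) = log b (\<epsilon> / (M - real L)) + log b M"
      using False \<epsilon> L M_pos by (simp only:) (intro log_mult_pos; simp)
    with False show ?thesis by simp
  qed simp
  have "in": "(if \<epsilon> = 1 then 0 else (1 - \<epsilon>) * log b ((1 - \<epsilon>) / (1 - (1 - real L / M))))
      = (1 - \<epsilon>) * (log b ((1 - \<epsilon>) / real L) + log b M)"
  proof (cases "\<epsilon> = 1")
    case False
    have "(1 - \<epsilon>) / (1 - (1 - real L / M)) = (1 - \<epsilon>) / real L * M" using L M_pos by (simp add: field_simps)
    then have "log b ((1 - \<epsilon>) / (1 - (1 - real L / M))) = log b ((1 - \<epsilon>) / real L) + log b M"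
      using False \<epsilon> L M_pos by (simp only:) (intro log_mult_pos; simp)
    with False show ?thesis by simp
  qed simp
  show ?thesis unfolding bin_rel_ent_def out "in" by (simp add: algebra_simps)
qed

lemma emeasure_pmf_prod_finite:
  fixes P :: "('a::finite \<times> 'b) pmf"
  shows "emeasure P A = (\<integral>\<^sup>+y. ennreal (\<Sum>x | (x, y) \<in> A. pmf P (x, y)) \<partial>count_space UNIV)"
proof -
  have "emeasure P A = (\<integral>\<^sup>+z. ennreal (indicator A z) \<partial>P)" by (simp add: ennreal_indicator)
  then show ?thesis
    by (simp add: nn_integral_pmf_prod_finite_real indicator_def sum.inter_filter[symmetric] if_distrib)
qed

lemma mult_measure_pmf_prod_finite_le:
  fixes P :: "('a::finite \<times> 'b) pmf"
  assumes c: "0 \<le> c" and d: "0 \<le> d"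
    and fibres: "\<And>y. c * (\<Sum>x | (x, y) \<in> A. pmf P (x, y)) \<le> d * (\<Sum>x | (x, y) \<in> B. pmf P (x, y))"
  shows "c * measure_pmf.prob P A \<le> d * measure_pmf.prob P B"
proof -
  have "ennreal (c * measure_pmf.prob P A) = ennreal c * emeasure P A"
    using c by (simp add: measure_pmf.emeasure_eq_measure ennreal_mult)
  also have "\<dots> = (\<integral>\<^sup>+y. ennreal (c * (\<Sum>x | (x, y) \<in> A. pmf P (x, y))) \<partial>count_space UNIV)"
    using c by (simp add: emeasure_pmf_prod_finite nn_integral_cmult ennreal_mult sum_nonneg)
  also have "\<dots> \<le> (\<integral>\<^sup>+y. ennreal (d * (\<Sum>x | (x, y) \<in> B. pmf P (x, y))) \<partial>count_space UNIV)"
    using fibres by (intro nn_integral_mono ennreal_leI)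
  also have "\<dots> = ennreal d * emeasure P B"
    using d by (simp add: emeasure_pmf_prod_finite nn_integral_cmult ennreal_mult sum_nonneg)
  also have "\<dots> = ennreal (d * measure_pmf.prob P B)"
    using d by (simp add: measure_pmf.emeasure_eq_measure ennreal_mult)
  finally show ?thesis using d by (simp add: ennreal_le_iff)
qed

lemma list_size_mult_prob_not_in_list_le:
  fixes P :: "('a::finite \<times> 'b) pmf"
  assumes list_size: "\<And>y. card (Ldec y) = L"
    and most_likely: "\<forall>y. \<forall>x\<in>Ldec y. \<forall>x'. x' \<notin> Ldec y \<longrightarrow> condp P x' y \<le> condp P x y"
  shows "real L * measure_pmf.prob P {(x, y). x \<notin> Ldec y}
       \<le> (real CARD('a) - real L) * (1 - measure_pmf.prob P {(x, y). x \<notin> Ldec y})"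
proof -
  have L_le: "L \<le> CARD('a)" using card_mono[of UNIV "Ldec undefined"] list_size by simp
  have card_compl: "card (- Ldec y) = CARD('a) - L" for y
    using list_size[of y] by (simp add: Compl_eq_Diff_UNIV card_Diff_subset)
  have "real L * measure_pmf.prob P {(x, y). x \<notin> Ldec y}
      \<le> (real CARD('a) - real L) * measure_pmf.prob P {(x, y). x \<in> Ldec y}"
  proof (rule mult_measure_pmf_prod_finite_le)
    show "0 \<le> real CARD('a) - real L" using L_le by simp
    fix y
    have le: "pmf P (x', y) \<le> pmf P (x, y)" if "x \<in> Ldec y" "x' \<notin> Ldec y" for x x'
      using most_likely that by (simp add: pmf_eq_pmf_snd_mult_condp[of P _ y] mult_left_mono)
    have "real L * (\<Sum>x'\<in>- Ldec y. pmf P (x', y)) = (\<Sum>x\<in>Ldec y. \<Sum>x'\<in>- Ldec y. pmf P (x', y))"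
      by (simp add: list_size)
    also have "\<dots> \<le> (\<Sum>x\<in>Ldec y. \<Sum>x'\<in>- Ldec y. pmf P (x, y))"
      by (intro sum_mono) (auto intro: le)
    also have "\<dots> = (real CARD('a) - real L) * (\<Sum>x\<in>Ldec y. pmf P (x, y))"
      using L_le by (simp add: card_compl of_nat_diff sum_distrib_left mult.commute)
    finally show "real L * (\<Sum>x | (x, y) \<in> {(x, y). x \<notin> Ldec y}. pmf P (x, y))
        \<le> (real CARD('a) - real L) * (\<Sum>x | (x, y) \<in> {(x, y). x \<in> Ldec y}. pmf P (x, y))"
      by (simp add: Compl_eq)
  qed simp
  moreover have "measure_pmf.prob P {(x, y). x \<in> Ldec y} = 1 - measure_pmf.prob P {(x, y). x \<notin> Ldec y}"
    using measure_pmf.prob_compl[of "{(x, y). x \<notin> Ldec y}" P] by (simp add: set_diff_eq case_prod_beta')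
  ultimately show ?thesis by simp
qed

lemma log_minus_bin_rel_ent_minus_cond_entropy:
  fixes P :: "('a::finite \<times> 'b) pmf" and Ldec :: "'b \<Rightarrow> 'a set"
  assumes L_pos: "0 < L" and L_lt: "L < CARD('a)"
  defines "PL \<equiv> measure_pmf.prob P {(x, y). x \<notin> Ldec y}"
  shows "log b (real CARD('a)) - bin_rel_ent b PL (1 - real L / real CARD('a)) - cond_entropy b P
       = measure_pmf.expectation P
           (\<lambda>z. ln (condp P (fst z) (snd z)) - ln (list_condp Ldec L PL (fst z) (snd z))) / ln b"
proof -
  define qi where "qi = (1 - PL) / real L"
  define qo where "qo = PL / (real CARD('a) - real L)"
  have ln_list_condp: "ln (list_condp Ldec L PL x y) = (if x \<in> Ldec y then ln qi else ln qo)" for x y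
    by (simp add: list_condp_def qi_def qo_def)
  have int_ln_q: "integrable P (\<lambda>z. ln (list_condp Ldec L PL (fst z) (snd z)))"
    unfolding ln_list_condp
    by (rule measure_pmf.integrable_const_bound[where B = "\<bar>ln qi\<bar> + \<bar>ln qo\<bar>"]) auto
  have E_ln_q: "measure_pmf.expectation P (\<lambda>z. ln (list_condp Ldec L PL (fst z) (snd z)))
      = (1 - PL) * ln qi + PL * ln qo"
    unfolding ln_list_condp by (simp add: expectation_if_mem_eq PL_def mult.commute)
  have H: "cond_entropy b P = - measure_pmf.expectation P (\<lambda>z. ln (condp P (fst z) (snd z))) / ln b"
    unfolding cond_entropy_def log_def by (simp add: case_prod_beta')
  have "log b (real CARD('a)) - bin_rel_ent b PL (1 - real L / real CARD('a))
      = - ((1 - PL) * log b qi + PL * log b qo)"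
    unfolding qi_def qo_def PL_def using L_pos L_lt by (intro log_minus_bin_rel_ent) simp_all
  also have "\<dots> = - ((1 - PL) * ln qi + PL * ln qo) / ln b"
    by (simp add: log_def add_divide_distrib diff_divide_distrib)
  finally have "log b (real CARD('a)) - bin_rel_ent b PL (1 - real L / real CARD('a))
      = - ((1 - PL) * ln qi + PL * ln qo) / ln b" .
  then show ?thesis
    unfolding H E_ln_q[symmetric]
    by (simp add: Bochner_Integration.integral_diff[OF integrable_ln_condp int_ln_q] diff_divide_distrib)
qed

lemma condp_le_Sup: "condp P x y \<le> (SUP xy. condp P (fst xy) (snd xy))"
  using condp_le_1 by (intro cSUP_upper2[where x = "(x, y)"] bdd_aboveI2[where M = 1]) auto

lemma expectation_condp_le_Sup:
  "measure_pmf.expectation P (\<lambda>(x, y). condp P x y) \<le> (SUP xy. condp P (fst xy) (snd xy))"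
proof -
  have "integrable P (\<lambda>(x, y). condp P x y)"
    by (rule measure_pmf.integrable_const_bound[where B = 1]) (auto simp: condp_nonneg condp_le_1)
  then have "measure_pmf.expectation P (\<lambda>(x, y). condp P x y)
      \<le> measure_pmf.expectation P (\<lambda>_. SUP xy. condp P (fst xy) (snd xy))"
    using condp_le_Sup by (intro integral_mono) auto
  then show ?thesis by simp
qed

lemma expectation_ln_condp_minus_ln_list_condp_ge:
  fixes P :: "('a::finite \<times> 'b) pmf" and L :: nat and Ldec :: "'b \<Rightarrow> 'a set" and t :: real
  assumes L_pos: "0 < L" and L_lt: "L < CARD('a)"
    and list_size: "\<And>y. card (Ldec y) = L"
  defines "M \<equiv> real CARD('a)"
    and "PL \<equiv> measure_pmf.prob P {(x, y). x \<notin> Ldec y}"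
    and "EP \<equiv> measure_pmf.expectation P (\<lambda>(x, y). condp P x y)"
    and "Smax \<equiv> (SUP xy. condp P (fst xy) (snd xy))"
  assumes t_in: "(1 - PL) / real L \<le> t" and t_out: "PL / (M - real L) \<le> t"
  shows "max (EP - t) 0 / (2 * Smax)
       \<le> measure_pmf.expectation P
           (\<lambda>z. ln (condp P (fst z) (snd z)) - ln (list_condp Ldec L PL (fst z) (snd z)))"
proof -
  define q where "q = list_condp Ldec L PL"
  have PL: "0 \<le> PL" "PL \<le> 1" by (simp_all add: PL_def)
  have q_nonneg: "0 \<le> q x y" for x y
    unfolding q_def using PL L_lt by (rule list_condp_nonneg)
  have q_pos: "0 < q x y" if "(x, y) \<in> set_pmf P" for x y
    unfolding q_def PL_def using that L_pos L_lt by (rule list_condp_pos)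
  have q_sum: "(\<Sum>x\<in>UNIV. q x y) = 1" for y
    unfolding q_def using list_size L_pos L_lt by (rule sum_list_condp)
  have q_le_t: "q x y \<le> t" for x y
    using t_in t_out by (simp add: q_def list_condp_def M_def)
  have int_ln_q: "integrable P (\<lambda>z. ln (q (fst z) (snd z)))"
    unfolding q_def list_condp_def
    by (rule measure_pmf.integrable_const_bound[where B = "\<bar>ln ((1 - PL) / L)\<bar> + \<bar>ln (PL / (M - L))\<bar>"])
       (auto simp: M_def)
  show ?thesis
  proof (cases "EP \<le> t")
    case True
    then show ?thesis
      using expectation_ln_condp_minus_ln_nonneg[OF q_nonneg q_pos _ int_ln_q] q_sum by (simp add: q_def)
  next
    case False
    have EP_le: "EP \<le> Smax" unfolding EP_def Smax_def by (rule expectation_condp_le_Sup)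
    define Q2 where "Q2 = (1 - PL) * ((1 - PL) / real L) + PL * (PL / (M - real L))"
    have "(EP - 2 * measure_pmf.expectation P (\<lambda>z. q (fst z) (snd z)) + Q2) / (2 * Smax)
        \<le> measure_pmf.expectation P (\<lambda>z. ln (condp P (fst z) (snd z)) - ln (q (fst z) (snd z)))"
      unfolding EP_def case_prod_beta'
    proof (rule expectation_ln_condp_minus_ln_ge[OF q_nonneg q_pos _ _ q_sum _ int_ln_q])
      show "q x y \<le> Smax" for x y using q_le_t[of x y] False EP_le by linarith
      show "condp P x y \<le> Smax" for x y unfolding Smax_def by (rule condp_le_Sup)
      show "(\<Sum>x\<in>UNIV. (q x y)\<^sup>2) = Q2" for y
        unfolding q_def M_def Q2_def using list_size L_pos L_lt by (rule sum_list_condp_square)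
    qed
    moreover have "measure_pmf.expectation P (\<lambda>z. q (fst z) (snd z)) = Q2"
      unfolding q_def list_condp_def Q2_def PL_def M_def by (simp add: expectation_if_mem_eq mult.commute)
    moreover have "Q2 \<le> t"
      using mult_left_mono[OF t_in, of "1 - PL"] mult_left_mono[OF t_out, of PL] PL
      by (simp add: Q2_def algebra_simps)
    moreover have "0 < Smax" using False EP_le q_nonneg q_le_t by (meson le_less_trans not_le order_trans)
    ultimately have "(EP - t) / (2 * Smax)
        \<le> measure_pmf.expectation P (\<lambda>z. ln (condp P (fst z) (snd z)) - ln (q (fst z) (snd z)))"
      by (smt (verit) divide_right_mono)
    with False show ?thesis by (simp add: q_def)
  qed
qed

lemma cond_entropy_le_list_bound:
  fixes b :: real and P :: "('a::finite \<times> 'b) pmf"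
    and L :: nat and Ldec :: "'b \<Rightarrow> 'a set" and t :: real
  assumes b: "1 < b"
    and L_pos: "0 < L" and L_lt: "L < CARD('a)"
    and list_size: "\<And>y. card (Ldec y) = L"
  defines "M \<equiv> real CARD('a)"
    and "PL \<equiv> measure_pmf.prob P {(x, y). x \<notin> Ldec y}"
    and "EP \<equiv> measure_pmf.expectation P (\<lambda>(x, y). condp P x y)"
    and "Smax \<equiv> (SUP xy. condp P (fst xy) (snd xy))"
  assumes t_in: "(1 - PL) / real L \<le> t" and t_out: "PL / (M - real L) \<le> t"
  shows "cond_entropy b P \<le> log b M - bin_rel_ent b PL (1 - real L / M)
           - log b (exp 1) / 2 * (max (EP - t) 0 / Smax)"
proof -
  define D where "D = measure_pmf.expectation P
      (\<lambda>z. ln (condp P (fst z) (snd z)) - ln (list_condp Ldec L PL (fst z) (snd z)))"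
  have "max (EP - t) 0 / (2 * Smax) \<le> D"
    using expectation_ln_condp_minus_ln_list_condp_ge[where P = P and Ldec = Ldec and t = t,
        OF L_pos L_lt list_size] t_in t_out
    unfolding D_def M_def PL_def EP_def Smax_def by blast
  then have "max (EP - t) 0 / (2 * Smax) / ln b \<le> D / ln b"
    using b by (intro divide_right_mono) simp_all
  moreover have "log b M - bin_rel_ent b PL (1 - real L / M) - cond_entropy b P = D / ln b"
    unfolding D_def M_def PL_def using L_pos L_lt by (rule log_minus_bin_rel_ent_minus_cond_entropy)
  moreover have "log b (exp 1) / 2 * (max (EP - t) 0 / Smax) = max (EP - t) 0 / (2 * Smax) / ln b"
    by (simp add: log_def)
  ultimately show ?thesis by linarith
qed

theorem corollary5:
  fixes b :: real and P :: "('a::finite \<times> 'b) pmf"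
    and L :: nat and Ldec :: "'b \<Rightarrow> 'a set"
  assumes b: "1 < b"
    and L_pos: "0 < L" and L_lt: "L < CARD('a)"
    and list_size: "\<And>y. card (Ldec y) = L"
  defines "M \<equiv> real CARD('a)"
    and "PL \<equiv> measure_pmf.prob P {(x, y). x \<notin> Ldec y}"
    and "EP \<equiv> measure_pmf.expectation P (\<lambda>(x, y). condp P x y)"
    and "Smax \<equiv> (SUP xy. condp P (fst xy) (snd xy))"
  shows
    "cond_entropy b P \<le> log b M - bin_rel_ent b PL (1 - real L / M)
        - log b (exp 1) / 2 *
          (max (EP - (1 - PL) / real L - PL / (M - real L)) 0 / Smax)
     \<and>
     ((\<forall>y. \<forall>x\<in>Ldec y. \<forall>x'. x' \<notin> Ldec y \<longrightarrow> condp P x' y \<le> condp P x y) \<longrightarrow>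
      cond_entropy b P \<le> log b M - bin_rel_ent b PL (1 - real L / M)
        - log b (exp 1) / 2 *
          (max (EP - (1 - PL) / real L) 0 / Smax))"
proof (intro conjI impI)
  have in_nonneg: "0 \<le> (1 - PL) / real L" and out_nonneg: "0 \<le> PL / (M - real L)"
    using L_lt by (simp_all add: PL_def M_def)
  show "cond_entropy b P \<le> log b M - bin_rel_ent b PL (1 - real L / M)
      - log b (exp 1) / 2 * (max (EP - (1 - PL) / real L - PL / (M - real L)) 0 / Smax)"
    using cond_entropy_le_list_bound[where P = P and t = "(1 - PL) / real L + PL / (M - real L)",
        OF b L_pos L_lt list_size]
      in_nonneg out_nonneg
    unfolding M_def PL_def EP_def Smax_def by (simp add: diff_diff_eq)
  assume "\<forall>y. \<forall>x\<in>Ldec y. \<forall>x'. x' \<notin> Ldec y \<longrightarrow> condp P x' y \<le> condp P x y"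
  then have "real L * PL \<le> (M - real L) * (1 - PL)"
    unfolding PL_def M_def by (rule list_size_mult_prob_not_in_list_le[OF list_size])
  then have "PL / (M - real L) \<le> (1 - PL) / real L"
    using L_pos L_lt by (simp add: M_def field_simps)
  then show "cond_entropy b P \<le> log b M - bin_rel_ent b PL (1 - real L / M)
      - log b (exp 1) / 2 * (max (EP - (1 - PL) / real L) 0 / Smax)"
    using cond_entropy_le_list_bound[where P = P and t = "(1 - PL) / real L", OF b L_pos L_lt list_size]
    unfolding M_def PL_def EP_def Smax_def by simp
qed

end
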